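(* For every constant $K>0$ there is a constant $C=C(K)$ such that for all integers $n\ge 2$ and all real $M$ with $1\le M\le K(\log n)^2$, $$\sum_{\substack{m\in\mathbb{Z}\\ M\le m\le n}} r(n,m)\le \frac{C\,n\log n}{M}.$$
   Context: Logarithms are natural. For positive integers $n,d$, the Euclidean algorithm sets $a_0=n$, $a_1=d$, and for $k\ge1$, as long as $a_k\ne0$, defines $a_{k+1}$ as the remainder of $a_{k-1}$ modulo $a_k$ and $q_k$ as the positive integer with $a_{k-1}=q_ka_k+a_{k+1}$; it stops at the first $\ell$ with $a_\ell=0$. The quotient sequence is $\mathbf{q}(n,d)=(q_1,\dots,q_{\ell-1})$. For integers $1\le m\le n$, $r(n,m)$ is the total number of occurrences of $m$ in the sequences $\mathbf{q}(n,d)$, summed over all $d\in\{1,\dots,n-1\}$ with $\gcd(n,d)=1$. *)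

theory Defs
  imports "HOL-Analysis.Analysis"
begin

fun quot_seq :: "nat \<Rightarrow> nat \<Rightarrow> nat list" where
  "quot_seq a b = (if b = 0 then [] else (a div b) # quot_seq b (a mod b))"

definition r :: "nat \<Rightarrow> nat \<Rightarrow> nat" where
  "r n m = (\<Sum>d\<in>{d. 1 \<le> d \<and> d \<le> n - 1 \<and> coprime n d}. count_list (quot_seq n d) m)"

end

theory Submission
  imports Defs "HOL-Analysis.Harmonic_Numbers"
begin

text \<open>
  Running the Euclidean algorithm on \<open>(n, d)\<close>, every remainder \<open>a\<^sub>k\<close> is congruent modulo \<open>n\<close>
  to \<open>\<plusminus>Y\<^sub>k d\<close>, where the cofactors \<open>Y\<^sub>k\<close> strictly increase and satisfy \<open>Y\<^sub>k a\<^sub>k \<le> n\<close>.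
  A quotient \<open>q\<^sub>k \<ge> M\<close> therefore yields a denominator \<open>Y = Y\<^sub>k\<close> with
  \<open>Y d \<equiv> c (mod n)\<close> for some \<open>0 < |c| \<le> n / (M Y)\<close>, and distinct large quotients yield
  distinct denominators. Swapping the order of summation, it remains to count, for fixed \<open>Y\<close>,
  the residues \<open>d\<close> with this property: \<open>c\<close> must be a multiple of \<open>g = gcd Y n\<close>, so there are
  at most \<open>2n/(gMY)\<close> choices of \<open>c\<close>, each with at most \<open>g\<close> solutions \<open>d\<close>. Summing \<open>2n/(MY)\<close>
  over \<open>Y \<le> n\<close> gives the harmonic sum and hence the bound \<open>O(n log n / M)\<close>.
\<close>

lemma card_linear_congruence_le:
  fixes n Y :: nat and c :: int
  assumes "n > 0"
  shows "card {d\<in>{..<n}. int n dvd int Y * int d - c} \<le> gcd Y n"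
proof -
  define g where "g = gcd Y n"
  define h where "h = n div g"
  have "g > 0" using assms by (simp add: g_def)
  have n_eq: "n = g * h" by (simp add: g_def h_def)
  have Y_eq: "Y = g * (Y div g)" by (simp add: g_def)
  have "coprime h (Y div g)"
    unfolding h_def g_def by (metis assms div_gcd_coprime gcd.commute gr_implies_not0)
  have "inj_on (\<lambda>d. d div h) {d\<in>{..<n}. int n dvd int Y * int d - c}"
  proof (rule inj_onI)
    fix d1 d2
    assume "d1 \<in> {d\<in>{..<n}. int n dvd int Y * int d - c}" "d2 \<in> {d\<in>{..<n}. int n dvd int Y * int d - c}"
      and div_eq: "d1 div h = d2 div h"
    then have "int n dvd (int Y * int d1 - c) - (int Y * int d2 - c)"
      using dvd_diff by blast
    then have "int n dvd int Y * int d1 - int Y * int d2"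
      by simp
    moreover have "int n = int g * int h"
      using n_eq by simp
    moreover have "int Y * int d1 - int Y * int d2 = int g * (int (Y div g) * (int d1 - int d2))"
      using arg_cong[OF Y_eq, of int] by (simp add: algebra_simps)
    ultimately have "int g * int h dvd int g * (int (Y div g) * (int d1 - int d2))"
      by simp
    then have "int h dvd int (Y div g) * (int d1 - int d2)"
      using \<open>g > 0\<close> by simp
    then have "int h dvd int d1 - int d2"
      using \<open>coprime h (Y div g)\<close> by (metis coprime_dvd_mult_right_iff coprime_int_iff)
    then have "d1 mod h = d2 mod h"
      by (metis mod_eq_dvd_iff of_nat_eq_iff zmod_int)
    with div_eq show "d1 = d2" by (metis div_mult_mod_eq)
  qed
  moreover have "(\<lambda>d. d div h) ` {d\<in>{..<n}. int n dvd int Y * int d - c} \<subseteq> {..<g}"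
    using n_eq assms by (auto simp: div_less_iff_less_mult mult.commute)
  ultimately show ?thesis
    using card_inj_on_le[of _ _ "{..<g}"] by (simp add: g_def)
qed

lemma card_nonzero_multiples_le:
  fixes g :: nat and t :: real
  assumes "g > 0" "t \<ge> 0"
  shows "real (card {c::int. c \<noteq> 0 \<and> real_of_int \<bar>c\<bar> \<le> t \<and> int g dvd c}) * real g \<le> 2 * t"
proof -
  define m where "m = \<lfloor>t / real g\<rfloor>"
  have "m \<ge> 0" using assms by (simp add: m_def)
  have "{c::int. c \<noteq> 0 \<and> real_of_int \<bar>c\<bar> \<le> t \<and> int g dvd c} \<subseteq> (\<lambda>k. int g * k) ` ({-m..-1} \<union> {1..m})"
  proof
    fix c :: int
    assume "c \<in> {c. c \<noteq> 0 \<and> real_of_int \<bar>c\<bar> \<le> t \<and> int g dvd c}"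
    then obtain k where "c = int g * k" "k \<noteq> 0" "real g * real_of_int \<bar>k\<bar> \<le> t"
      by (auto simp: abs_mult)
    moreover from this have "\<bar>k\<bar> \<le> m"
      using assms by (simp add: m_def le_floor_iff field_simps)
    ultimately show "c \<in> (\<lambda>k. int g * k) ` ({-m..-1} \<union> {1..m})"
      by (auto simp: abs_if split: if_splits)
  qed
  then have "card {c::int. c \<noteq> 0 \<and> real_of_int \<bar>c\<bar> \<le> t \<and> int g dvd c}
      \<le> card ((\<lambda>k. int g * k) ` ({-m..-1} \<union> {1..m}))"
    by (intro card_mono) auto
  also have "\<dots> \<le> card ({-m..-1} \<union> {1..m})"
    by (rule card_image_le) simp
  also have "\<dots> \<le> 2 * nat m"
    using card_Un_le[of "{-m..-1}" "{1..m}"] by simp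
  finally have "real (card {c::int. c \<noteq> 0 \<and> real_of_int \<bar>c\<bar> \<le> t \<and> int g dvd c}) * real g \<le> 2 * real_of_int m * real g"
    using assms \<open>m \<ge> 0\<close> by (simp add: mult_right_mono)
  also have "\<dots> = 2 * (real g * real_of_int m)"
    by simp
  also have "\<dots> \<le> 2 * (real g * (t / real g))"
    unfolding m_def by (intro mult_left_mono of_int_floor_le) simp_all
  also have "\<dots> = 2 * t"
    using assms by simp
  finally show ?thesis .
qed

definition good_denoms :: "nat \<Rightarrow> nat \<Rightarrow> real \<Rightarrow> nat set" where
  "good_denoms n d M = {Y\<in>{1..n}. \<exists>c::int. c \<noteq> 0 \<and> real_of_int \<bar>c\<bar> * M * real Y \<le> real n \<and>
     int n dvd int Y * int d - c}"

lemma finite_good_denoms [simp]: "finite (good_denoms n d M)"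
  by (rule finite_subset[of _ "{1..n}"]) (auto simp: good_denoms_def)

lemma card_good_denom_residues_le:
  fixes n Y :: nat and M :: real
  assumes "n > 0" "Y \<ge> 1" "M > 0"
  shows "real (card {d\<in>{..<n}. Y \<in> good_denoms n d M}) \<le> 2 * real n / (M * real Y)"
proof -
  define g where "g = gcd Y n"
  define C where "C = {c::int. c \<noteq> 0 \<and> real_of_int \<bar>c\<bar> \<le> real n / (M * real Y) \<and> int g dvd c}"
  have "g > 0" using assms by (simp add: g_def)
  have "finite C"
    by (rule finite_subset[of _ "{-\<lceil>real n / (M * real Y)\<rceil>..\<lceil>real n / (M * real Y)\<rceil>}"])
      (auto simp: C_def abs_le_iff minus_le_iff le_ceiling_iff)
  have "{d\<in>{..<n}. Y \<in> good_denoms n d M} \<subseteq> (\<Union>c\<in>C. {d\<in>{..<n}. int n dvd int Y * int d - c})"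
  proof
    fix d
    assume "d \<in> {d\<in>{..<n}. Y \<in> good_denoms n d M}"
    then obtain c :: int where d: "d < n" and c: "c \<noteq> 0" "real_of_int \<bar>c\<bar> * M * real Y \<le> real n"
      "int n dvd int Y * int d - c"
      by (auto simp: good_denoms_def)
    have "int g dvd int n" "int g dvd int Y * int d"
      by (simp_all add: g_def)
    then have "int g dvd int Y * int d - (int Y * int d - c)"
      using c(3) by (meson dvd_diff dvd_trans)
    with c assms have "c \<in> C"
      by (simp add: C_def field_simps)
    with d c show "d \<in> (\<Union>c\<in>C. {d\<in>{..<n}. int n dvd int Y * int d - c})"
      by blast
  qed
  then have "card {d\<in>{..<n}. Y \<in> good_denoms n d M} \<le> card (\<Union>c\<in>C. {d\<in>{..<n}. int n dvd int Y * int d - c})"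
    by (intro card_mono) (auto intro: finite_subset[of _ "{..<n}"])
  also have "\<dots> \<le> (\<Sum>c\<in>C. card {d\<in>{..<n}. int n dvd int Y * int d - c})"
    by (rule card_UN_le[OF \<open>finite C\<close>])
  also have "\<dots> \<le> card C * g"
    using sum_mono[of C _ "\<lambda>_. g"] card_linear_congruence_le[OF assms(1)] by (simp add: g_def)
  finally have "real (card {d\<in>{..<n}. Y \<in> good_denoms n d M}) \<le> real (card C) * real g"
    by (metis of_nat_le_iff of_nat_mult)
  also have "\<dots> \<le> 2 * (real n / (M * real Y))"
    unfolding C_def using \<open>g > 0\<close> assms by (intro card_nonzero_multiples_le) auto
  finally show ?thesis by simp
qed

lemma quot_seq_Cons: "b \<noteq> 0 \<Longrightarrow> quot_seq a b = a div b # quot_seq b (a mod b)"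
  by simp

lemma abs_diff_mult_opposite_signs:
  fixes x y q :: "'a :: linordered_idom"
  assumes "x * y \<le> 0" "q \<ge> 0"
  shows "\<bar>x - q * y\<bar> = \<bar>x\<bar> + q * \<bar>y\<bar>"
proof -
  consider "x \<ge> 0" "y \<le> 0" | "x \<le> 0" "y \<ge> 0"
    using assms(1) by (auto simp: mult_le_0_iff)
  then show ?thesis
  proof cases
    case 1
    with assms have "q * y \<le> 0" by (simp add: mult_nonneg_nonpos)
    with 1 assms show ?thesis by (simp add: abs_of_nonneg abs_of_nonpos abs_mult)
  next
    case 2
    with assms have "x - q * y \<le> 0"
      by (meson diff_le_0_iff_le mult_nonneg_nonneg order_trans)
    with 2 assms show ?thesis by (simp add: abs_of_nonneg abs_of_nonpos abs_mult)
  qed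
qed

text \<open>
  Invariant of the Euclidean algorithm on \<open>(n, d)\<close> at consecutive remainders \<open>a > b\<close>:
  they are \<open>u d\<close> and \<open>v d\<close> modulo \<open>n\<close>, and \<open>n = |v| a + |u| b\<close> is the determinant identity
  of the continuants. Starting after the first division step guarantees \<open>|u| \<ge> 1\<close>, which
  makes \<open>|v|\<close> strictly increasing.
\<close>
definition euclid_cofactors :: "nat \<Rightarrow> nat \<Rightarrow> nat \<Rightarrow> nat \<Rightarrow> int \<Rightarrow> int \<Rightarrow> bool" where
  "euclid_cofactors n d a b u v \<longleftrightarrow> b < a \<and> int n = \<bar>v\<bar> * int a + \<bar>u\<bar> * int b \<and> u * v \<le> 0 \<and>
     1 \<le> \<bar>u\<bar> \<and> 1 \<le> \<bar>v\<bar> \<and> int n dvd int a - u * int d \<and> int n dvd int b - v * int d"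

lemma euclid_cofactors_step:
  assumes inv: "euclid_cofactors n d a b u v" and "b \<noteq> 0"
  defines "w \<equiv> u - int (a div b) * v"
  shows "euclid_cofactors n d b (a mod b) v w" and "\<bar>v\<bar> < \<bar>w\<bar>"
proof -
  define q where "q = a div b"
  have "q \<ge> 1"
    using inv \<open>b \<noteq> 0\<close> by (simp add: q_def euclid_cofactors_def div_greater_zero_iff Suc_le_eq)
  have a_eq: "int a = int q * int b + int (a mod b)"
    unfolding q_def by (metis div_mult_mod_eq of_nat_add of_nat_mult)
  have abs_w: "\<bar>w\<bar> = \<bar>u\<bar> + int q * \<bar>v\<bar>"
    unfolding w_def q_def using inv by (intro abs_diff_mult_opposite_signs) (simp_all add: euclid_cofactors_def)
  have "v * w = u * v - int q * (v * v)"
    by (simp add: w_def q_def algebra_simps)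
  moreover have "int q * (v * v) \<ge> 0"
    by simp
  moreover have "int n dvd int (a mod b) - w * int d"
  proof -
    have "int (a mod b) - w * int d = (int a - u * int d) - int q * (int b - v * int d)"
      by (simp add: a_eq w_def q_def algebra_simps)
    moreover have "int n dvd int a - u * int d" "int n dvd int b - v * int d"
      using inv unfolding euclid_cofactors_def by blast+
    ultimately show ?thesis
      by (metis dvd_diff dvd_mult)
  qed
  moreover have "int q * \<bar>v\<bar> \<ge> \<bar>v\<bar>"
    using \<open>q \<ge> 1\<close> by (simp add: mult_le_cancel_right1)
  ultimately show "euclid_cofactors n d b (a mod b) v w" "\<bar>v\<bar> < \<bar>w\<bar>"
    using inv \<open>b \<noteq> 0\<close> abs_w a_eq
    by (auto simp: euclid_cofactors_def algebra_simps)
qed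

lemma euclid_cofactors_good_denom:
  assumes inv: "euclid_cofactors n d a b u v" and "b \<noteq> 0" and "M \<le> real (a div b)"
  shows "nat \<bar>v\<bar> \<in> good_denoms n d M"
proof -
  define c where "c = sgn v * int b"
  have "v \<noteq> 0" "1 \<le> \<bar>v\<bar>" "\<bar>v\<bar> * int a \<le> int n" "1 \<le> a"
    using inv by (auto simp: euclid_cofactors_def)
  have "int (nat \<bar>v\<bar>) * int d - c = - sgn v * (int b - v * int d)"
    using abs_sgn[of v] by (simp add: c_def algebra_simps)
  moreover have "int n dvd int b - v * int d"
    using inv unfolding euclid_cofactors_def by blast
  ultimately have "int n dvd int (nat \<bar>v\<bar>) * int d - c"
    by (metis dvd_mult)
  have "real b * M \<le> real b * real (a div b)"
    using assms(3) by (simp add: mult_left_mono)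
  also have "\<dots> \<le> real a"
    by (metis of_nat_le_iff of_nat_mult div_mult_mod_eq le_add1 mult.commute)
  finally have "real_of_int \<bar>c\<bar> * M * real (nat \<bar>v\<bar>) \<le> real a * real_of_int \<bar>v\<bar>"
    by (simp add: c_def abs_mult \<open>v \<noteq> 0\<close> mult_right_mono)
  also have "\<dots> \<le> real n"
    using \<open>\<bar>v\<bar> * int a \<le> int n\<close> by (metis of_int_le_iff of_int_mult of_int_of_nat_eq mult.commute)
  finally have "real_of_int \<bar>c\<bar> * M * real (nat \<bar>v\<bar>) \<le> real n" .
  moreover have "\<bar>v\<bar> \<le> int n"
    using \<open>\<bar>v\<bar> * int a \<le> int n\<close> \<open>1 \<le> a\<close> \<open>v \<noteq> 0\<close> mult_le_cancel_left1[of "\<bar>v\<bar>" "int a"]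
    by linarith
  moreover have "c \<noteq> 0"
    using \<open>v \<noteq> 0\<close> \<open>b \<noteq> 0\<close> by (simp add: c_def sgn_0_0)
  ultimately show ?thesis
    using \<open>1 \<le> \<bar>v\<bar>\<close> \<open>int n dvd int (nat \<bar>v\<bar>) * int d - c\<close>
    by (auto simp: good_denoms_def)
qed

lemma length_filter_large_quotients_le:
  "euclid_cofactors n d a b u v \<Longrightarrow>
     length (filter (\<lambda>q. M \<le> real q) (quot_seq a b)) \<le> card (good_denoms n d M \<inter> {nat \<bar>v\<bar>..})"
proof (induction a b arbitrary: u v rule: quot_seq.induct)
  case (1 a b)
  show ?case
  proof (cases "b = 0")
    case True
    then show ?thesis by simp
  next
    case False
    then have quot_seq_ab: "quot_seq a b = a div b # quot_seq b (a mod b)"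
      by (rule quot_seq_Cons)
    define w where "w = u - int (a div b) * v"
    have step: "euclid_cofactors n d b (a mod b) v w" "\<bar>v\<bar> < \<bar>w\<bar>"
      using euclid_cofactors_step[OF "1.prems" False] by (simp_all add: w_def)
    have IH: "length (filter (\<lambda>q. M \<le> real q) (quot_seq b (a mod b))) \<le> card (good_denoms n d M \<inter> {nat \<bar>w\<bar>..})"
      using "1.IH"[OF False step(1)] .
    have sub: "good_denoms n d M \<inter> {nat \<bar>w\<bar>..} \<subseteq> good_denoms n d M \<inter> {nat \<bar>v\<bar>..} - {nat \<bar>v\<bar>}"
      using step(2) by auto
    show ?thesis
    proof (cases "M \<le> real (a div b)")
      case True
      then have "nat \<bar>v\<bar> \<in> good_denoms n d M \<inter> {nat \<bar>v\<bar>..}"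
        using euclid_cofactors_good_denom[OF "1.prems" False] by simp
      then have "card (good_denoms n d M \<inter> {nat \<bar>w\<bar>..}) < card (good_denoms n d M \<inter> {nat \<bar>v\<bar>..})"
        using sub by (intro psubset_card_mono) auto
      with IH True show ?thesis
        by (simp add: quot_seq_ab del: quot_seq.simps)
    next
      case False
      moreover have "card (good_denoms n d M \<inter> {nat \<bar>w\<bar>..}) \<le> card (good_denoms n d M \<inter> {nat \<bar>v\<bar>..})"
        using sub by (intro card_mono) auto
      ultimately show ?thesis
        using IH by (simp add: quot_seq_ab del: quot_seq.simps)
    qed
  qed
qed

lemma length_filter_large_quotients_le_twice:
  assumes "0 < d" "d < n"
  shows "length (filter (\<lambda>q. M \<le> real q) (quot_seq n d)) \<le> 2 * card (good_denoms n d M)"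
proof -
  have "euclid_cofactors n d d (n mod d) 1 (- int (n div d))"
  proof -
    have "n div d \<ge> 1"
      using assms by (simp add: div_greater_zero_iff Suc_le_eq)
    moreover have "int n = int (n div d) * int d + int (n mod d)"
      by (metis div_mult_mod_eq of_nat_add of_nat_mult)
    ultimately show ?thesis
      using assms unfolding euclid_cofactors_def by (auto simp: algebra_simps)
  qed
  then have tail: "length (filter (\<lambda>q. M \<le> real q) (quot_seq d (n mod d))) \<le> card (good_denoms n d M)"
    by (rule le_trans[OF length_filter_large_quotients_le card_mono[OF finite_good_denoms Int_lower1]])
  have head: "card (good_denoms n d M) \<ge> 1" if "M \<le> real (n div d)"
  proof -
    have "real d * M \<le> real d * real (n div d)"
      using that by (simp add: mult_left_mono)
    also have "\<dots> \<le> real n"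
      by (metis of_nat_le_iff of_nat_mult div_mult_mod_eq le_add1 mult.commute)
    finally have "1 \<in> good_denoms n d M"
      using assms by (auto simp: good_denoms_def intro!: exI[of _ "int d"])
    then show ?thesis
      by (metis One_nat_def Suc_leI card_gt_0_iff empty_iff finite_good_denoms)
  qed
  have "quot_seq n d = n div d # quot_seq d (n mod d)"
    using assms by (intro quot_seq_Cons) simp
  with tail head show ?thesis
    by (cases "M \<le> real (n div d)") (simp_all del: quot_seq.simps)
qed

lemma sum_count_list_le_length_filter:
  assumes "finite S" "\<And>x. x \<in> S \<Longrightarrow> P x"
  shows "(\<Sum>m\<in>S. count_list xs m) \<le> length (filter P xs)"
proof (induction xs)
  case (Cons x xs)
  have "(\<Sum>m\<in>S. count_list (x # xs) m) = (\<Sum>m\<in>S. count_list xs m) + (\<Sum>m\<in>S. if x = m then 1 else 0)"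
    unfolding sum.distrib[symmetric] by (intro sum.cong) auto
  also have "(\<Sum>m\<in>S. if x = m then 1 else 0) = (if x \<in> S then 1 else 0)"
    using assms(1) by (simp add: sum.delta)
  finally have "(\<Sum>m\<in>S. count_list (x # xs) m) = (\<Sum>m\<in>S. count_list xs m) + (if x \<in> S then 1 else 0)" .
  with Cons assms(2) show ?case
    by auto
qed simp

lemma sum_r_le_sum_large_quotients:
  "(\<Sum>m\<in>{m. M \<le> real m \<and> m \<le> n}. r n m) \<le> (\<Sum>d\<in>{1..n-1}. length (filter (\<lambda>q. M \<le> real q) (quot_seq n d)))"
proof -
  define D where "D = {d. 1 \<le> d \<and> d \<le> n - 1 \<and> coprime n d}"
  have "(\<Sum>m\<in>{m. M \<le> real m \<and> m \<le> n}. r n m) = (\<Sum>d\<in>D. \<Sum>m\<in>{m. M \<le> real m \<and> m \<le> n}. count_list (quot_seq n d) m)"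
    unfolding r_def D_def by (rule sum.swap)
  also have "\<dots> \<le> (\<Sum>d\<in>D. length (filter (\<lambda>q. M \<le> real q) (quot_seq n d)))"
    by (intro sum_mono sum_count_list_le_length_filter) auto
  also have "\<dots> \<le> (\<Sum>d\<in>{1..n-1}. length (filter (\<lambda>q. M \<le> real q) (quot_seq n d)))"
    by (rule sum_mono2) (auto simp: D_def)
  finally show ?thesis .
qed

lemma sum_card_good_denoms_le:
  assumes "n > 0" "M > 0"
  shows "real (\<Sum>d<n. card (good_denoms n d M)) \<le> 2 * real n / M * harm n"
proof -
  have "(\<Sum>d<n. card (good_denoms n d M)) = (\<Sum>d<n. card {Y\<in>{1..n}. Y \<in> good_denoms n d M})"
    by (intro sum.cong refl arg_cong[where f = card]) (auto simp: good_denoms_def)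
  also have "\<dots> = (\<Sum>Y\<in>{1..n}. card {d\<in>{..<n}. Y \<in> good_denoms n d M})"
    using sum.swap_restrict[of "{..<n}" "{1..n}" "\<lambda>_ _. 1::nat" "\<lambda>d Y. Y \<in> good_denoms n d M"] by simp
  finally have "real (\<Sum>d<n. card (good_denoms n d M)) = (\<Sum>Y\<in>{1..n}. real (card {d\<in>{..<n}. Y \<in> good_denoms n d M}))"
    by simp
  also have "\<dots> \<le> (\<Sum>Y\<in>{1..n}. 2 * real n / (M * real Y))"
    using assms by (intro sum_mono card_good_denom_residues_le) auto
  also have "\<dots> = 2 * real n / M * harm n"
    by (simp add: harm_def sum_distrib_left field_simps)
  finally show ?thesis .
qed

lemma harm_le_five_halves_ln:
  assumes "n \<ge> 2"
  shows "harm n \<le> 5 / 2 * ln (real n)"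
proof -
  have "harm n - ln (real n) \<le> 1"
    using euler_mascheroni_sequence_decreasing[of 1 n] assms by (simp add: harm_def)
  moreover have "ln 2 \<le> ln (real n)"
    using assms by simp
  ultimately show ?thesis
    using ln2_ge_two_thirds by linarith
qed

theorem lemma5p1:
  fixes K :: real
  assumes "K > 0"
  shows "\<exists>C::real. \<forall>(n::nat) (M::real). n \<ge> 2 \<longrightarrow> 1 \<le> M \<longrightarrow> M \<le> K * (ln (real n))^2 \<longrightarrow>
           real (\<Sum>m\<in>{m::nat. M \<le> real m \<and> m \<le> n}. r n m) \<le> C * real n * ln (real n) / M"
proof (intro exI allI impI)
  fix n :: nat and M :: real
  assume "n \<ge> 2" "1 \<le> M"
  have "real (\<Sum>m\<in>{m. M \<le> real m \<and> m \<le> n}. r n m)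
      \<le> real (\<Sum>d\<in>{1..n-1}. length (filter (\<lambda>q. M \<le> real q) (quot_seq n d)))"
    using sum_r_le_sum_large_quotients of_nat_le_iff by blast
  also have "\<dots> \<le> real (\<Sum>d\<in>{1..n-1}. 2 * card (good_denoms n d M))"
    by (intro of_nat_mono sum_mono length_filter_large_quotients_le_twice) auto
  also have "\<dots> = 2 * real (\<Sum>d\<in>{1..n-1}. card (good_denoms n d M))"
    by (simp add: sum_distrib_left)
  also have "\<dots> \<le> 2 * real (\<Sum>d<n. card (good_denoms n d M))"
    by (intro mult_left_mono of_nat_mono sum_mono2) auto
  also have "\<dots> \<le> 4 * real n / M * harm n"
    using sum_card_good_denoms_le[of n M] \<open>n \<ge> 2\<close> \<open>1 \<le> M\<close> by simp
  also have "\<dots> \<le> 4 * real n / M * (5 / 2 * ln (real n))"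
    using harm_le_five_halves_ln[OF \<open>n \<ge> 2\<close>] \<open>1 \<le> M\<close> by (intro mult_left_mono) simp_all
  finally show "real (\<Sum>m\<in>{m. M \<le> real m \<and> m \<le> n}. r n m) \<le> 10 * real n * ln (real n) / M"
    by simp
qed

end
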